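(* For every hypothesis class $\mathcal{F}\subseteq\mathcal{Y}^{\mathcal{X}}$ (with $\mathcal{Y}$ finite), $\mathrm{DFFdim}(\mathrm{OtD}(\mathcal{F}))=\mathrm{Ldim}(\mathcal{F})$.
   Context: Setting. A teacher over $\mathcal{X},\mathcal{Y},\Phi$ ($\Phi$ a set of Boolean features on $\mathcal{X}$, $\bot$ a null symbol) is a pair $T=(\ell,\psi)$ with $\ell:\mathcal{X}\to\mathcal{Y}$ and $\psi:\mathcal{X}\times\mathcal{X}\to\Phi\cup\{\bot\}$ such that whenever $\ell(x)\neq\ell(\hat x)$, $\phi:=\psi(x,\hat x)\in\Phi$, $\phi(x)=1$ and $\phi(\hat x)=0$. A teacher class is a set of teachers. A history is a non-empty set $H\subseteq\mathcal{X}\times\mathcal{Y}$, $H_{\mathcal{X}}=\{x:\exists y,(x,y)\in H\}$; a teacher $(\ell,\psi)$ is consistent with $H$ if $\ell(x)=y$ for all $(x,y)\in H$; $\mathcal{T}_H$ is the set of teachers in $\mathcal{T}$ consistent with $H$. DFF dimension. A DFF tree is a rooted tree whose nodes are triples $\langle y,\phi,x\rangle$ with $y\in\mathcal{Y}\cup\{\bot\}$, $\phi\in\Phi\cup\{\bot\}$, $x\in\mathcal{X}\cup\{\bot\}$, such that the root has $y=\phi=\bot$, a node has $x=\bot$ iff it is a leaf, every edge is labeled by a pair $(\hat x,\hat y)\in\mathcal{X}\times\mathcal{Y}$, and every non-root node $\langle y,\phi,x\rangle$ with incoming edge $(\hat x,\hat y)$ has $\phi\neq\bot$ whenever $y\neq\hat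 y$. For a parent–child pair $\langle\cdot,\cdot,x\rangle\xrightarrow{(\hat x,\hat y)}\langle y,\phi,\cdot\rangle$ on a path, $(x,y)$ is called a labeled example in that path. A path from the root is consistent with a teacher $(\ell,\psi)$ if for every such parent–child pair on it, $\ell(x)=y$ and, if $y\neq\hat y$, $\psi(x,\hat x)=\phi$. Given $\mathcal{T}$ consistent with $H$, a DFF tree is shattered by $\mathcal{T}$ and $H$ if: (1) every non-root node $\langle y,\phi,x\rangle$ with incoming edge $(\hat x,\hat y)$ has $y\neq\hat y$; (2) the labels of the outgoing edges of each non-leaf node $v$ are exactly the pairs that belong to $H$ or are labeled examples in the path from the root to $v$; (3) every root-to-leaf path is consistent with some teacher in $\mathcal{T}_H$; (4) all root-to-leaf paths have the same number of edges, called the height. $\mathrm{DFFdim}(\mathcal{T},H)$ is the maximal height of a DFF tree shattered by $\mathcal{T}$ and $H$. $\mathrm{Ldim}$ is the (multiclass) Littlestone dimension: the maximal depth of a complete binary tree whose internal nodes are labeled by examples and whose two outgoing edges at each internal node are labeled by two distinct labels, such that for every root-to-leaf path some $f\in\mathcal{F}$ agrees with all (example, edge label) pairs on the path. Mapping OtD: given $\mathcal{F}\subseteq\mathcal{Y}^{\mathcal{X}}$, for each $y\in\mathcal{Y}$ let $\star_y\notin\mathcal{X}$ be a new distinct point, $H=\{(\star_y,y):y\in\mathcal{Y}\}$, $\mathcal{X}'=\mathcal{X}\cup H_{\mathcal{X}}$, and $\Phi=\{\mathbb{I}[x]:x\in\mathcal{X}'\}$ where $\mathbb{I}[x](x')=1$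 iff $x'=x$. For $f\in\mathcal{F}$ let $f':\mathcal{X}'\to\mathcal{Y}$ extend $f$ by $f'(\star_y)=y$, let $\psi_f(x,x')=\mathbb{I}[x]$, and $T_f=(f',\psi_f)$. Then $\mathrm{OtD}(\mathcal{F})=(\mathcal{T}_{\mathcal{F}},H)$ with $\mathcal{T}_{\mathcal{F}}=\{T_f:f\in\mathcal{F}\}$ (a teacher class over $\mathcal{X}',\mathcal{Y},\Phi$). *)

theory Defs
  imports "HOL-Library.Extended_Nat"
begin

text \<open>A teacher over X (the universe of type 'x), Y (the universe of type 'y) and a set of
 Boolean features Phi on X.  The null symbol is None.\<close>

type_synonym ('x,'y) teacher = "('x \<Rightarrow> 'y) \<times> ('x \<Rightarrow> 'x \<Rightarrow> ('x \<Rightarrow> bool) option)"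

definition is_teacher :: "('x \<Rightarrow> bool) set \<Rightarrow> ('x,'y) teacher \<Rightarrow> bool" where
  "is_teacher Phi T \<longleftrightarrow>
     (\<forall>x xh. fst T x \<noteq> fst T xh \<longrightarrow>
        (\<exists>\<phi>. snd T x xh = Some \<phi> \<and> \<phi> \<in> Phi \<and> \<phi> x \<and> \<not> \<phi> xh))"

definition consistent_hist :: "('x,'y) teacher \<Rightarrow> ('x \<times> 'y) set \<Rightarrow> bool" where
  "consistent_hist T H \<longleftrightarrow> (\<forall>(x,y)\<in>H. fst T x = y)"

definition teachers_consistent :: "('x,'y) teacher set \<Rightarrow> ('x \<times> 'y) set \<Rightarrow> ('x,'y) teacher set" where
  "teachers_consistent TT H = {T \<in> TT. consistent_hist T H}"

text \<open>A node is a triple (y, phi, x) of options (None = null symbol) together with its outgoing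
 edges, given as a partial map from edge labels (xh, yh) to child subtrees.\<close>

datatype ('x,'y,'p) dff =
  DNode (lab: "'y option") (feat: "'p option") (qry: "'x option")
        (kids: "'x \<times> 'y \<Rightarrow> ('x,'y,'p) dff option")

text \<open>A step of a path: the query x of the parent, the edge label (xh,yh), and the child node.\<close>

type_synonym ('x,'y,'p) step = "'x \<times> ('x \<times> 'y) \<times> ('x,'y,'p) dff"

inductive reach :: "('x,'y,'p) dff \<Rightarrow> ('x,'y,'p) step list \<Rightarrow> ('x,'y,'p) dff \<Rightarrow> bool"
  for t where
  reach_root: "reach t [] t"
| reach_step: "reach t p v \<Longrightarrow> qry v = Some x \<Longrightarrow> kids v e = Some c
     \<Longrightarrow> reach t (p @ [(x, e, c)]) c"

definition labeled_examples :: "('x,'y,'p) step list \<Rightarrow> ('x \<times> 'y) set" where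
  "labeled_examples p = {(x, y) | x e c y. (x, e, c) \<in> set p \<and> lab c = Some y}"

definition dff_tree :: "'p set \<Rightarrow> ('x,'y,'p) dff \<Rightarrow> bool" where
  "dff_tree Phi t \<longleftrightarrow>
     lab t = None \<and> feat t = None \<and>
     (\<forall>p v. reach t p v \<longrightarrow> (qry v = None \<longleftrightarrow> (\<forall>e. kids v e = None))) \<and>
     (\<forall>p v \<phi>. reach t p v \<longrightarrow> feat v = Some \<phi> \<longrightarrow> \<phi> \<in> Phi) \<and>
     (\<forall>p x xh yh c. reach t (p @ [(x, (xh, yh), c)]) c \<longrightarrow>
         lab c \<noteq> Some yh \<longrightarrow> feat c \<noteq> None)"

definition path_consistent :: "('x,'y) teacher \<Rightarrow> ('x,'y,'x \<Rightarrow> bool) step list \<Rightarrow> bool" where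
  "path_consistent T p \<longleftrightarrow>
     (\<forall>(x, (xh, yh), c) \<in> set p.
        lab c = Some (fst T x) \<and> (lab c \<noteq> Some yh \<longrightarrow> feat c = snd T x xh))"

definition dff_shattered ::
  "('x,'y) teacher set \<Rightarrow> ('x \<times> 'y) set \<Rightarrow> nat \<Rightarrow> ('x,'y,'x \<Rightarrow> bool) dff \<Rightarrow> bool" where
  "dff_shattered TT H d t \<longleftrightarrow>
     \<comment> \<open>(1)\<close>
     (\<forall>p x xh yh c. reach t (p @ [(x, (xh, yh), c)]) c \<longrightarrow> lab c \<noteq> Some yh) \<and>
     \<comment> \<open>(2)\<close>
     (\<forall>p v. reach t p v \<longrightarrow> qry v \<noteq> None \<longrightarrow>
        {e. kids v e \<noteq> None} = H \<union> labeled_examples p) \<and>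
     \<comment> \<open>(3)\<close>
     (\<forall>p v. reach t p v \<longrightarrow> qry v = None \<longrightarrow>
        (\<exists>T \<in> teachers_consistent TT H. path_consistent T p)) \<and>
     \<comment> \<open>(4) all root-to-leaf paths have d edges\<close>
     (\<forall>p v. reach t p v \<longrightarrow> qry v = None \<longrightarrow> length p = d)"

definition DFFdim :: "('x \<Rightarrow> bool) set \<Rightarrow> ('x,'y) teacher set \<Rightarrow> ('x \<times> 'y) set \<Rightarrow> enat" where
  "DFFdim Phi TT H = Sup {enat d | d. \<exists>t. dff_tree Phi t \<and> dff_shattered TT H d t}"

datatype ('x,'y) ltree = LLeaf | LNode 'x 'y "('x,'y) ltree" 'y "('x,'y) ltree"

fun lcomplete :: "nat \<Rightarrow> ('x,'y) ltree \<Rightarrow> bool" where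
  "lcomplete d LLeaf \<longleftrightarrow> d = 0"
| "lcomplete d (LNode x y1 l y2 r) \<longleftrightarrow>
     (\<exists>d'. d = Suc d' \<and> y1 \<noteq> y2 \<and> lcomplete d' l \<and> lcomplete d' r)"

fun lpaths :: "('x,'y) ltree \<Rightarrow> ('x \<times> 'y) list set" where
  "lpaths LLeaf = {[]}"
| "lpaths (LNode x y1 l y2 r) = ((#) (x, y1)) ` lpaths l \<union> ((#) (x, y2)) ` lpaths r"

definition Ldim :: "('x \<Rightarrow> 'y) set \<Rightarrow> enat" where
  "Ldim F = Sup {enat d | d. \<exists>t. lcomplete d t \<and>
                    (\<forall>p \<in> lpaths t. \<exists>f \<in> F. \<forall>(x, y) \<in> set p. f x = y)}"

text \<open>X' = X \<union> {star_y}: realised as the sum type, star_y = Inr y.\<close>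

definition otd_history :: "(('x + 'y) \<times> 'y) set" where
  "otd_history = {(Inr y, y) | y. True}"

definition otd_features :: "('x + 'y \<Rightarrow> bool) set" where
  "otd_features = {(\<lambda>x'. x' = x) | x. True}"

definition otd_teacher :: "('x \<Rightarrow> 'y) \<Rightarrow> ('x + 'y, 'y) teacher" where
  "otd_teacher f = (case_sum f (\<lambda>y. y), (\<lambda>x x'. Some (\<lambda>z. z = x)))"

definition otd_teachers :: "('x \<Rightarrow> 'y) set \<Rightarrow> ('x + 'y, 'y) teacher set" where
  "otd_teachers F = otd_teacher ` F"

end

theory Submission
  imports Defs
begin

(* A DFF tree shattered by OtD(F) is a Littlestone tree in disguise.  Because the history
   contains every example (star_y, y) and every child label must differ from its edge label,
   a query node has children with two distinct labels y1 and y2; since a star point has a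
   fixed label, the query is a point of X.  The subtrees below these two children give,
   inductively, a mistake tree for the version space of the path.  Conversely, a Littlestone
   tree becomes a DFF tree by letting the teacher answer y1 on every edge not labelled y1 and
   y2 on the others, with the indicator of the query as the feature. *)

definition ltree_shattered :: "('x \<Rightarrow> 'y) set \<Rightarrow> nat \<Rightarrow> ('x, 'y) ltree \<Rightarrow> bool" where
  "ltree_shattered F d t \<longleftrightarrow> lcomplete d t \<and> (\<forall>p \<in> lpaths t. \<exists>f \<in> F. \<forall>(x, y) \<in> set p. f x = y)"

lemma Ldim_eq_Sup_ltree_shattered: "Ldim F = Sup {enat d | d. \<exists>t. ltree_shattered F d t}"
  by (simp add: Ldim_def ltree_shattered_def)

lemma lpaths_nonempty: "lcomplete d t \<Longrightarrow> lpaths t \<noteq> {}"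
  by (induction t arbitrary: d) auto

lemma ltree_shattered_nonempty: "ltree_shattered F d t \<Longrightarrow> F \<noteq> {}"
  unfolding ltree_shattered_def using lpaths_nonempty by fastforce

lemma ltree_shattered_LLeaf: "ltree_shattered F 0 LLeaf \<longleftrightarrow> F \<noteq> {}"
  by (auto simp: ltree_shattered_def)

lemma ltree_shattered_LNode:
  assumes "y1 \<noteq> y2"
    and "ltree_shattered {f \<in> F. f x = y1} d l" and "ltree_shattered {f \<in> F. f x = y2} d r"
  shows "ltree_shattered F (Suc d) (LNode x y1 l y2 r)"
  using assms by (fastforce simp: ltree_shattered_def)

lemma ltree_shattered_mono: "ltree_shattered F d t \<Longrightarrow> F \<subseteq> G \<Longrightarrow> ltree_shattered G d t"
  unfolding ltree_shattered_def by blast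

lemma reach_Nil: "reach t [] v \<longleftrightarrow> v = t"
  by (auto elim: reach.cases intro: reach_root)

lemma reach_Cons:
  "reach t ((x, e, c) # p) v \<longleftrightarrow> qry t = Some x \<and> kids t e = Some c \<and> reach c p v"
proof
  have "reach t p' v \<Longrightarrow> p' = (x, e, c) # p \<Longrightarrow> qry t = Some x \<and> kids t e = Some c \<and> reach c p v"
    for p'
  proof (induction arbitrary: p rule: reach.induct)
    case (reach_step p' v' x' e' c')
    show ?case
    proof (cases p')
      case Nil
      then show ?thesis using reach_step by (auto simp: reach_Nil intro: reach_root)
    next
      case Cons
      then show ?thesis using reach_step by (auto intro: reach.reach_step)
    qed
  qed simp
  then show "reach t ((x, e, c) # p) v \<Longrightarrow> qry t = Some x \<and> kids t e = Some c \<and> reach c p v"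
    by blast
next
  have "reach c p v \<Longrightarrow> qry t = Some x \<Longrightarrow> kids t e = Some c \<Longrightarrow> reach t ((x, e, c) # p) v"
    by (induction rule: reach.induct) (use reach_root reach.reach_step in \<open>fastforce+\<close>)
  then show "qry t = Some x \<and> kids t e = Some c \<and> reach c p v \<Longrightarrow> reach t ((x, e, c) # p) v"
    by blast
qed

lemma reach_last_step: "reach t p v \<Longrightarrow> p \<noteq> [] \<Longrightarrow> \<exists>p' x e. p = p' @ [(x, e, v)]"
  by (cases rule: reach.cases) auto

lemma labeled_examples_Cons:
  "lab c = Some y \<Longrightarrow> labeled_examples ((x, e, c) # p) = insert (x, y) (labeled_examples p)"
  unfolding labeled_examples_def by (cases e) fastforce

lemma path_consistent_Nil: "path_consistent T []"
  by (simp add: path_consistent_def)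

lemma path_consistent_Cons:
  "path_consistent T ((x, (xh, yh), c) # p) \<longleftrightarrow>
     lab c = Some (fst T x) \<and> (lab c \<noteq> Some yh \<longrightarrow> feat c = snd T x xh) \<and> path_consistent T p"
  by (simp add: path_consistent_def)

lemma path_consistent_snoc:
  "path_consistent T (p @ [(x, (xh, yh), c)]) \<longleftrightarrow>
     path_consistent T p \<and> lab c = Some (fst T x) \<and> (lab c \<noteq> Some yh \<longrightarrow> feat c = snd T x xh)"
  by (auto simp: path_consistent_def)

lemma otd_teacher_simps [simp]:
  "fst (otd_teacher f) (Inl a) = f a"
  "fst (otd_teacher f) (Inr y) = y"
  "snd (otd_teacher f) x xh = Some (\<lambda>z. z = x)"
  by (simp_all add: otd_teacher_def)

lemma otd_teacher_consistent:
  "f \<in> F \<Longrightarrow> otd_teacher f \<in> teachers_consistent (otd_teachers F) otd_history"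
  by (auto simp: teachers_consistent_def otd_teachers_def consistent_hist_def otd_history_def)

lemma dff_shattered_edge_label:
  "dff_shattered TT H d t \<Longrightarrow> reach t (p @ [(x, (xh, yh), c)]) c \<Longrightarrow> lab c \<noteq> Some yh"
  unfolding dff_shattered_def by blast

lemma dff_shattered_history_edge:
  assumes "dff_shattered TT H d t" and "reach t p v" and "qry v = Some x" and "e \<in> H"
  obtains c where "kids v e = Some c"
  using assms unfolding dff_shattered_def by blast

lemma dff_shattered_leaf:
  assumes "dff_shattered TT H d t" and "reach t p v" and "qry v = None"
  shows "length p = d" and "\<exists>T \<in> teachers_consistent TT H. path_consistent T p"
  using assms unfolding dff_shattered_def by blast+

definition version_space ::
  "('x \<Rightarrow> 'y) set \<Rightarrow> ('x + 'y, 'y, 'x + 'y \<Rightarrow> bool) step list \<Rightarrow> ('x \<Rightarrow> 'y) set" where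
  "version_space F p = {f \<in> F. path_consistent (otd_teacher f) p}"

lemma version_space_Nil: "version_space F [] = F"
  by (simp add: version_space_def path_consistent_Nil)

lemma version_space_snoc_subset:
  "lab c = Some y \<Longrightarrow>
     version_space F (p @ [(x, (xh, yh), c)]) \<subseteq> {f \<in> version_space F p. fst (otd_teacher f) x = y}"
  by (auto simp: version_space_def path_consistent_snoc)

lemma ltree_shattered_otd_query:
  assumes "y1 \<noteq> y2"
    and l: "ltree_shattered {f \<in> F. fst (otd_teacher f) x = y1} d l"
    and r: "ltree_shattered {f \<in> F. fst (otd_teacher f) x = y2} d r"
  shows "\<exists>t. ltree_shattered F (Suc d) t"
proof (cases x)
  case (Inl a)
  then show ?thesis
    using ltree_shattered_LNode[of y1 y2 F a d l r] assms by auto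
next
  case (Inr b)
  then have "y1 = b" and "y2 = b"
    using ltree_shattered_nonempty[OF l] ltree_shattered_nonempty[OF r] by auto
  with \<open>y1 \<noteq> y2\<close> show ?thesis
    by simp
qed

lemma dff_shattered_subtree_ltree:
  assumes sh: "dff_shattered (otd_teachers F) otd_history d t"
  shows "reach t p v \<Longrightarrow> length p \<le> d \<and> (\<exists>lt. ltree_shattered (version_space F p) (d - length p) lt)"
proof (induction v arbitrary: p)
  case (DNode lb ph q ks)
  show ?case
  proof (cases q)
    case None
    then have "length p = d"
      using dff_shattered_leaf(1)[OF sh DNode.prems] by simp
    moreover obtain T where "T \<in> teachers_consistent (otd_teachers F) otd_history" "path_consistent T p"
      using dff_shattered_leaf(2)[OF sh DNode.prems] None by auto
    then have "version_space F p \<noteq> {}"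
      by (auto simp: teachers_consistent_def otd_teachers_def version_space_def)
    ultimately show ?thesis
      using ltree_shattered_LLeaf by (metis diff_self_eq_0 order_refl)
  next
    case (Some x)
    have child: "\<exists>y'. y' \<noteq> y \<and> Suc (length p) \<le> d \<and>
        (\<exists>lt. ltree_shattered {f \<in> version_space F p. fst (otd_teacher f) x = y'} (d - Suc (length p)) lt)"
      for y
    proof -
      obtain c where c: "ks (Inr y, y) = Some c"
        using dff_shattered_history_edge[OF sh DNode.prems, of x "(Inr y, y)"] Some
        by (auto simp: otd_history_def)
      let ?p' = "p @ [(x, (Inr y, y), c)]"
      have reach_c: "reach t ?p' c"
        using reach_step[OF DNode.prems, of x "(Inr y, y)" c] Some c by simp
      obtain lt where "Suc (length p) \<le> d"
        and lt: "ltree_shattered (version_space F ?p') (d - Suc (length p)) lt"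
        using DNode.IH[OF rangeI _ reach_c, of "(Inr y, y)"] c by auto
      obtain f where "path_consistent (otd_teacher f) ?p'"
        using ltree_shattered_nonempty[OF lt] by (auto simp: version_space_def)
      then obtain y' where y': "lab c = Some y'"
        by (auto simp: path_consistent_snoc)
      show ?thesis
        using ltree_shattered_mono[OF lt version_space_snoc_subset[OF y']] y'
          dff_shattered_edge_label[OF sh reach_c] \<open>Suc (length p) \<le> d\<close> by auto
    qed
    obtain y1 lt1 where "Suc (length p) \<le> d"
      and lt1: "ltree_shattered {f \<in> version_space F p. fst (otd_teacher f) x = y1} (d - Suc (length p)) lt1"
      using child by blast
    obtain y2 lt2 where "y2 \<noteq> y1"
      and lt2: "ltree_shattered {f \<in> version_space F p. fst (otd_teacher f) x = y2} (d - Suc (length p)) lt2"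
      using child by blast
    have "Suc (d - Suc (length p)) = d - length p"
      using \<open>Suc (length p) \<le> d\<close> by simp
    then show ?thesis
      using ltree_shattered_otd_query[OF not_sym[OF \<open>y2 \<noteq> y1\<close>] lt1 lt2] \<open>Suc (length p) \<le> d\<close> by auto
  qed
qed

lemma dff_shattered_imp_ltree_shattered:
  "dff_shattered (otd_teachers F) otd_history d t \<Longrightarrow> \<exists>lt. ltree_shattered F d lt"
  using dff_shattered_subtree_ltree[OF _ reach_root] by (fastforce simp: version_space_Nil)

(* lb and ph are the label and feature of the node, S collects the labeled examples of the
   path to it.  The child takes label y1 unless the edge is labelled y1, so its label always
   differs from the edge label, as condition (1) of shattering demands. *)
primrec dff_of_ltree ::
  "('x, 'y) ltree \<Rightarrow> 'y option \<Rightarrow> ('x + 'y \<Rightarrow> bool) option \<Rightarrow> (('x + 'y) \<times> 'y) set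
     \<Rightarrow> ('x + 'y, 'y, 'x + 'y \<Rightarrow> bool) dff" where
  "dff_of_ltree LLeaf lb ph S = DNode lb ph None (\<lambda>_. None)"
| "dff_of_ltree (LNode a y1 l y2 r) lb ph S = DNode lb ph (Some (Inl a))
     (\<lambda>e. if e \<in> otd_history \<union> S then
        Some (if snd e \<noteq> y1 then dff_of_ltree l (Some y1) (Some (\<lambda>z. z = Inl a)) (insert (Inl a, y1) S)
              else dff_of_ltree r (Some y2) (Some (\<lambda>z. z = Inl a)) (insert (Inl a, y2) S))
      else None)"

lemma lab_dff_of_ltree [simp]: "lab (dff_of_ltree lt lb ph S) = lb"
  by (cases lt) auto

lemma feat_dff_of_ltree [simp]: "feat (dff_of_ltree lt lb ph S) = ph"
  by (cases lt) auto

lemma qry_dff_of_ltree_eq_None: "qry (dff_of_ltree lt lb ph S) = None \<longleftrightarrow> lt = LLeaf"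
  by (cases lt) auto

lemma reach_dff_of_ltree_ConsE:
  assumes "lcomplete n lt" and "reach (dff_of_ltree lt lb ph S) ((x, (xh, yh), c) # p) v"
  obtains a y t' n' where "x = Inl a" and "y \<noteq> yh" and "n = Suc n'" and "lcomplete n' t'"
    and "\<forall>q \<in> lpaths t'. (a, y) # q \<in> lpaths lt"
    and "c = dff_of_ltree t' (Some y) (Some (\<lambda>z. z = Inl a)) (insert (Inl a, y) S)"
    and "reach c p v"
proof (cases lt)
  case LLeaf
  then show ?thesis
    using assms(2) by (simp add: reach_Cons)
next
  case (LNode a y1 l y2 r)
  obtain n' where n': "n = Suc n'" "y1 \<noteq> y2" "lcomplete n' l" "lcomplete n' r"
    using assms(1) LNode by auto
  have step: "x = Inl a" "kids (dff_of_ltree lt lb ph S) (xh, yh) = Some c" "reach c p v"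
    using assms(2) LNode by (simp_all add: reach_Cons)
  show ?thesis
  proof (cases "yh = y1")
    case True
    then show ?thesis
      using that[of a y2 n' r] step n' LNode by (auto split: if_splits)
  next
    case False
    then show ?thesis
      using that[of a y1 n' l] step n' LNode by (auto split: if_splits)
  qed
qed

lemma reach_dff_of_ltree_node:
  "lcomplete n lt \<Longrightarrow> reach (dff_of_ltree lt lb ph S) p v \<Longrightarrow>
     \<exists>lt' lb' ph'. v = dff_of_ltree lt' lb' ph' (S \<union> labeled_examples p)"
proof (induction p arbitrary: n lt lb ph S)
  case Nil
  then show ?case
    by (auto simp: reach_Nil labeled_examples_def)
next
  case (Cons s p)
  obtain x xh yh c where s: "s = (x, (xh, yh), c)"
    by (cases s) auto
  obtain a y t' n' where "x = Inl a" and "y \<noteq> yh" and "n = Suc n'" and "lcomplete n' t'"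
    and "\<forall>q \<in> lpaths t'. (a, y) # q \<in> lpaths lt"
    and c: "c = dff_of_ltree t' (Some y) (Some (\<lambda>z. z = Inl a)) (insert (Inl a, y) S)"
    and "reach c p v"
    using Cons.prems unfolding s by (rule reach_dff_of_ltree_ConsE)
  have "S \<union> labeled_examples (s # p) = insert (Inl a, y) S \<union> labeled_examples p"
    using s c \<open>x = Inl a\<close> by (simp add: labeled_examples_Cons)
  moreover obtain lt' lb' ph' where "v = dff_of_ltree lt' lb' ph' (insert (Inl a, y) S \<union> labeled_examples p)"
    using Cons.IH[OF \<open>lcomplete n' t'\<close>] \<open>reach c p v\<close> c by blast
  ultimately show ?case
    by metis
qed

lemma reach_dff_of_ltree_steps:
  "lcomplete n lt \<Longrightarrow> reach (dff_of_ltree lt lb ph S) p v \<Longrightarrow> (x, (xh, yh), c) \<in> set p \<Longrightarrow>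
     \<exists>a. x = Inl a \<and> lab c \<noteq> Some yh \<and> feat c = Some (\<lambda>z. z = Inl a)"
proof (induction p arbitrary: n lt lb ph S)
  case (Cons s p)
  obtain x' xh' yh' c' where s: "s = (x', (xh', yh'), c')"
    by (cases s) auto
  obtain a y t' n' where "x' = Inl a" and "y \<noteq> yh'" and "n = Suc n'" and "lcomplete n' t'"
    and "\<forall>q \<in> lpaths t'. (a, y) # q \<in> lpaths lt"
    and c': "c' = dff_of_ltree t' (Some y) (Some (\<lambda>z. z = Inl a)) (insert (Inl a, y) S)"
    and "reach c' p v"
    using Cons.prems(1,2) unfolding s by (rule reach_dff_of_ltree_ConsE)
  show ?case
  proof (cases "(x, (xh, yh), c) = s")
    case True
    then show ?thesis
      using s c' \<open>x' = Inl a\<close> \<open>y \<noteq> yh'\<close> by simp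
  next
    case False
    then show ?thesis
      using Cons.IH[OF \<open>lcomplete n' t'\<close> \<open>reach c' p v\<close>[unfolded c']] Cons.prems(3) by simp
  qed
qed simp

lemma reach_dff_of_ltree_leaf:
  "lcomplete n lt \<Longrightarrow> reach (dff_of_ltree lt lb ph S) p v \<Longrightarrow> qry v = None \<Longrightarrow>
     length p = n \<and>
     (\<exists>q \<in> lpaths lt. \<forall>f. (\<forall>(x, y) \<in> set q. f x = y) \<longrightarrow> path_consistent (otd_teacher f) p)"
proof (induction p arbitrary: n lt lb ph S)
  case Nil
  then show ?case
    by (auto simp: reach_Nil qry_dff_of_ltree_eq_None path_consistent_Nil)
next
  case (Cons s p)
  obtain x xh yh c where s: "s = (x, (xh, yh), c)"
    by (cases s) auto
  obtain a y t' n' where "x = Inl a" and "y \<noteq> yh" and "n = Suc n'" and "lcomplete n' t'"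
    and paths: "\<forall>q \<in> lpaths t'. (a, y) # q \<in> lpaths lt"
    and c: "c = dff_of_ltree t' (Some y) (Some (\<lambda>z. z = Inl a)) (insert (Inl a, y) S)"
    and "reach c p v"
    using Cons.prems(1,2) unfolding s by (rule reach_dff_of_ltree_ConsE)
  obtain q where "length p = n'" "q \<in> lpaths t'"
    and q: "\<forall>f. (\<forall>(x, y) \<in> set q. f x = y) \<longrightarrow> path_consistent (otd_teacher f) p"
    using Cons.IH[OF \<open>lcomplete n' t'\<close> \<open>reach c p v\<close>[unfolded c] Cons.prems(3)] by blast
  show ?case
  proof (intro conjI bexI)
    show "length (s # p) = n"
      using \<open>length p = n'\<close> \<open>n = Suc n'\<close> by simp
    show "(a, y) # q \<in> lpaths lt"
      using paths \<open>q \<in> lpaths t'\<close> by blast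
    show "\<forall>f. (\<forall>(x, y) \<in> set ((a, y) # q). f x = y) \<longrightarrow> path_consistent (otd_teacher f) (s # p)"
      using q s c \<open>x = Inl a\<close> by (auto simp: path_consistent_Cons)
  qed
qed

lemma dff_tree_dff_of_ltree:
  assumes lt: "lcomplete d lt"
  shows "dff_tree otd_features (dff_of_ltree lt None None {})" (is "dff_tree _ ?t")
  unfolding dff_tree_def
proof (intro conjI allI impI)
  show "lab ?t = None" and "feat ?t = None"
    by simp_all
next
  fix p v
  assume "reach ?t p v"
  then obtain lt' lb' ph' where v: "v = dff_of_ltree lt' lb' ph' ({} \<union> labeled_examples p)"
    using reach_dff_of_ltree_node[OF lt] by blast
  show "qry v = None \<longleftrightarrow> (\<forall>e. kids v e = None)"
    by (cases lt') (auto simp: v otd_history_def)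
next
  fix p v \<phi>
  assume reach_v: "reach ?t p v" and \<phi>: "feat v = Some \<phi>"
  then have "p \<noteq> []"
    by (auto simp: reach_Nil)
  then obtain p' x xh yh where "p = p' @ [(x, (xh, yh), v)]"
    using reach_last_step[OF reach_v] by auto
  then show "\<phi> \<in> otd_features"
    using reach_dff_of_ltree_steps[OF lt reach_v, of x xh yh v] \<phi> by (auto simp: otd_features_def)
next
  fix p x xh yh c
  assume "reach ?t (p @ [(x, (xh, yh), c)]) c"
  then show "feat c \<noteq> None"
    using reach_dff_of_ltree_steps[OF lt] by fastforce
qed

lemma dff_shattered_dff_of_ltree:
  assumes sh: "ltree_shattered F d lt"
  shows "dff_shattered (otd_teachers F) otd_history d (dff_of_ltree lt None None {})"
    (is "dff_shattered _ _ _ ?t")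
proof -
  have lt: "lcomplete d lt"
    using sh by (simp add: ltree_shattered_def)
  show ?thesis
    unfolding dff_shattered_def
  proof (intro conjI allI impI)
    fix p x xh yh c
    assume "reach ?t (p @ [(x, (xh, yh), c)]) c"
    then show "lab c \<noteq> Some yh"
      using reach_dff_of_ltree_steps[OF lt] by fastforce
  next
    fix p v
    assume "reach ?t p v" and "qry v \<noteq> None"
    moreover obtain lt' lb' ph' where "v = dff_of_ltree lt' lb' ph' ({} \<union> labeled_examples p)"
      using reach_dff_of_ltree_node[OF lt \<open>reach ?t p v\<close>] by blast
    ultimately show "{e. kids v e \<noteq> None} = otd_history \<union> labeled_examples p"
      by (cases lt') auto
  next
    fix p v
    assume "reach ?t p v" and "qry v = None"
    note leaf = reach_dff_of_ltree_leaf[OF lt this]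
    then show "length p = d"
      by blast
    obtain q where "q \<in> lpaths lt"
      and "\<forall>f. (\<forall>(x, y) \<in> set q. f x = y) \<longrightarrow> path_consistent (otd_teacher f) p"
      using leaf by blast
    moreover obtain f where "f \<in> F" "\<forall>(x, y) \<in> set q. f x = y"
      using sh \<open>q \<in> lpaths lt\<close> by (auto simp: ltree_shattered_def)
    ultimately show "\<exists>T \<in> teachers_consistent (otd_teachers F) otd_history. path_consistent T p"
      using otd_teacher_consistent by blast
  qed
qed

theorem mainTheorem8:
  fixes F :: "('x \<Rightarrow> 'y::finite) set"
  shows "DFFdim otd_features (otd_teachers F) otd_history = Ldim F"
proof -
  have "(\<exists>t. dff_tree otd_features t \<and> dff_shattered (otd_teachers F) otd_history d t)
      \<longleftrightarrow> (\<exists>lt. ltree_shattered F d lt)" for d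
  proof
    assume "\<exists>t. dff_tree otd_features t \<and> dff_shattered (otd_teachers F) otd_history d t"
    then show "\<exists>lt. ltree_shattered F d lt"
      using dff_shattered_imp_ltree_shattered by blast
  next
    assume "\<exists>lt. ltree_shattered F d lt"
    then show "\<exists>t. dff_tree otd_features t \<and> dff_shattered (otd_teachers F) otd_history d t"
      using dff_tree_dff_of_ltree dff_shattered_dff_of_ltree ltree_shattered_def by blast
  qed
  then show ?thesis
    by (simp add: DFFdim_def Ldim_eq_Sup_ltree_shattered)
qed

end
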